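(* Let $G$ be a finite loopless graph with no clique on $D+1$ vertices and with maximum degree $\Delta(G)\leq D$. Let $c\ge 1$ be an integer and let $D=\sum_{i=1}^{c+1}\alpha_i$, where $\alpha_1,\dots,\alpha_{c+1}\geq 2$ are integers. Let $\Xi$ be the set of all (not necessarily proper) colorings $\psi:V(G)\to\{1,\dots,c+1\}$, and for $\psi\in\Xi$ let $\Phi(\psi)=\sum_{i=1}^{c+1}\frac{f_i(\psi)}{\alpha_i}$, where $f_i(\psi)$ is the number of edges of $G$ both of whose endpoints have color $i$ under $\psi$. Then there exists a coloring $\xi\in\Xi$ such that: (1) $\Phi(\xi)=\min_{\psi\in\Xi}\Phi(\psi)$; and (2) for every $1\leq i\leq c+1$, there is no clique in $G$ on $\alpha_i+1$ vertices all of which have color $i$ under $\xi$. *)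

theory Defs
  imports Complex_Main
begin

text \<open>A finite loopless (multi)graph on the finite vertex type 'a is given by an
edge multiplicity function m on 2-element vertex sets: m e is the number of
parallel edges joining the two endpoints of e.\<close>

definition loopless_multigraph :: "('a::finite set \<Rightarrow> nat) \<Rightarrow> bool" where
  "loopless_multigraph m \<longleftrightarrow> (\<forall>e. 0 < m e \<longrightarrow> card e = 2)"

definition degree :: "('a::finite set \<Rightarrow> nat) \<Rightarrow> 'a \<Rightarrow> nat" where
  "degree m v = (\<Sum>e\<in>{e. v \<in> e}. m e)"

definition max_degree :: "('a::finite set \<Rightarrow> nat) \<Rightarrow> nat" where
  "max_degree m = Max (range (degree m))"

definition is_clique :: "('a::finite set \<Rightarrow> nat) \<Rightarrow> 'a set \<Rightarrow> bool" where
  "is_clique m K \<longleftrightarrow> (\<forall>u\<in>K. \<forall>v\<in>K. u \<noteq> v \<longrightarrow> 0 < m {u, v})"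

definition mono_edges :: "('a::finite set \<Rightarrow> nat) \<Rightarrow> ('a \<Rightarrow> nat) \<Rightarrow> nat \<Rightarrow> nat" where
  "mono_edges m psi i = (\<Sum>e\<in>{e. card e = 2 \<and> (\<forall>x\<in>e. psi x = i)}. m e)"

definition colorings :: "nat \<Rightarrow> ('a::finite \<Rightarrow> nat) set" where
  "colorings c = {psi. \<forall>v. psi v \<in> {1..c+1}}"

definition Phi :: "('a::finite set \<Rightarrow> nat) \<Rightarrow> nat \<Rightarrow> (nat \<Rightarrow> nat) \<Rightarrow> ('a \<Rightarrow> nat) \<Rightarrow> real" where
  "Phi m c \<alpha> psi = (\<Sum>i=1..c+1. real (mono_edges m psi i) / real (\<alpha> i))"

end

theory Submission
  imports Defs "HOL-Library.FuncSet"
begin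

text \<open>Take a colouring \<open>psi\<close> that minimises \<open>Phi\<close> and, among those, has the
  fewest monochromatic \<open>(\<alpha> i + 1)\<close>-cliques of colour \<open>i\<close>, and suppose \<open>K\<close> is such a
  clique. Minimality of \<open>Phi\<close> forces every vertex \<open>x\<close> of \<open>K\<close> to have exactly
  \<open>\<alpha> l\<close> neighbours of each colour \<open>l\<close>, so that recolouring \<open>x\<close> to \<open>l\<close> keeps the
  colouring optimal and creates the monochromatic clique formed by \<open>x\<close> and these
  neighbours. If two neighbours of \<open>x\<close> of different colours were non-adjacent,
  repeating such recolourings, alternating between two colours, would produce an
  infinite walk through ever new vertices. Hence \<open>x\<close> and all its neighbours form
  a clique on \<open>D + 1\<close> vertices, which is excluded.\<close>

definition col_nbrs :: "('a::finite set \<Rightarrow> nat) \<Rightarrow> ('a \<Rightarrow> nat) \<Rightarrow> nat \<Rightarrow> 'a \<Rightarrow> 'a set" where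
  "col_nbrs m psi l v = {u. u \<noteq> v \<and> 0 < m {u, v} \<and> psi u = l}"

definition col_degree :: "('a::finite set \<Rightarrow> nat) \<Rightarrow> ('a \<Rightarrow> nat) \<Rightarrow> nat \<Rightarrow> 'a \<Rightarrow> nat" where
  "col_degree m psi l v = (\<Sum>u\<in>{u. u \<noteq> v \<and> psi u = l}. m {u, v})"

lemma card_col_nbrs_le_col_degree: "card (col_nbrs m psi l v) \<le> col_degree m psi l v"
proof -
  have "card (col_nbrs m psi l v) = (\<Sum>u\<in>col_nbrs m psi l v. 1)" by simp
  also have "\<dots> \<le> (\<Sum>u\<in>col_nbrs m psi l v. m {u, v})"
    by (rule sum_mono) (auto simp: col_nbrs_def)
  also have "\<dots> \<le> col_degree m psi l v" unfolding col_degree_def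
    by (rule sum_mono2) (auto simp: col_nbrs_def)
  finally show ?thesis .
qed

lemma col_nbrs_fun_upd: "col_nbrs m (psi(v := l)) j v = col_nbrs m psi j v"
  unfolding col_nbrs_def by auto

lemma col_degree_fun_upd: "col_degree m (psi(v := l)) j v = col_degree m psi j v"
  unfolding col_degree_def by (rule sum.cong) auto

lemma edges_at_eq_image:
  "{e. card e = 2 \<and> v \<in> e \<and> P e} = (\<lambda>u. {u, v}) ` {u. u \<noteq> v \<and> P {u, v}}"
proof
  show "{e. card e = 2 \<and> v \<in> e \<and> P e} \<subseteq> (\<lambda>u. {u, v}) ` {u. u \<noteq> v \<and> P {u, v}}"
  proof
    fix e assume e: "e \<in> {e. card e = 2 \<and> v \<in> e \<and> P e}"
    then obtain u where "e = {u, v}" "u \<noteq> v"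
      by (auto simp: card_2_iff doubleton_eq_iff)
    with e show "e \<in> (\<lambda>u. {u, v}) ` {u. u \<noteq> v \<and> P {u, v}}" by auto
  qed
qed auto

lemma sum_edges_at:
  fixes v :: "'a::finite"
  shows "(\<Sum>e\<in>{e. card e = 2 \<and> v \<in> e \<and> P e}. f e) = (\<Sum>u\<in>{u. u \<noteq> v \<and> P {u, v}}. f {u, v})"
  unfolding edges_at_eq_image
  by (rule sum.reindex_cong[where l="\<lambda>u. {u, v}"]) (auto simp: inj_on_def doubleton_eq_iff)

lemma mono_edges_split:
  "mono_edges m psi j = (\<Sum>e\<in>{e. card e = 2 \<and> (\<forall>x\<in>e. psi x = j) \<and> v \<notin> e}. m e)
      + (if psi v = j then col_degree m psi j v else 0)"
proof -
  let ?A = "{e. card e = 2 \<and> (\<forall>x\<in>e. psi x = j) \<and> v \<notin> e}"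
  let ?B = "{e. card e = 2 \<and> v \<in> e \<and> (\<forall>x\<in>e. psi x = j)}"
  have "mono_edges m psi j = sum m ?A + sum m ?B"
    unfolding mono_edges_def by (subst sum.union_disjoint[symmetric]) (auto intro: sum.cong)
  moreover have "sum m ?B = (if psi v = j then col_degree m psi j v else 0)"
    by (auto simp: sum_edges_at col_degree_def intro: sum.cong)
  ultimately show ?thesis by simp
qed

lemma mono_edges_fun_upd:
  assumes "psi v = i" "i \<noteq> l"
  shows "real (mono_edges m (psi(v := l)) j) =
     real (mono_edges m psi j) + (if j = l then real (col_degree m psi l v) else 0)
      - (if j = i then real (col_degree m psi i v) else 0)"
proof -
  have "{e. card e = 2 \<and> (\<forall>x\<in>e. (psi(v := l)) x = j) \<and> v \<notin> e}
      = {e. card e = 2 \<and> (\<forall>x\<in>e. psi x = j) \<and> v \<notin> e}" by auto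
  then show ?thesis
    using mono_edges_split[of m "psi(v := l)" j v] mono_edges_split[of m psi j v] assms
    by (auto simp: col_degree_fun_upd)
qed

lemma Phi_fun_upd:
  assumes "psi \<in> colorings c" "psi v = i" "l \<in> {1..c+1}" "i \<noteq> l"
  shows "Phi m c \<alpha> (psi(v := l)) = Phi m c \<alpha> psi + real (col_degree m psi l v) / real (\<alpha> l)
           - real (col_degree m psi i v) / real (\<alpha> i)"
proof -
  have i: "i \<in> {1..c+1}" using assms by (auto simp: colorings_def)
  have "Phi m c \<alpha> (psi(v := l)) = (\<Sum>j=1..c+1. real (mono_edges m psi j) / real (\<alpha> j)
     + (if j = l then real (col_degree m psi l v) / real (\<alpha> l) else 0)
     - (if j = i then real (col_degree m psi i v) / real (\<alpha> i) else 0))"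
    unfolding Phi_def using mono_edges_fun_upd[of psi v i l m, OF assms(2,4)]
    by (intro sum.cong) (simp_all add: add_divide_distrib diff_divide_distrib)
  also have "\<dots> = Phi m c \<alpha> psi + real (col_degree m psi l v) / real (\<alpha> l)
           - real (col_degree m psi i v) / real (\<alpha> i)"
    unfolding Phi_def sum_subtractf sum.distrib using assms(3) i by simp
  finally show ?thesis .
qed

lemma degree_eq_sum_nbrs:
  assumes "loopless_multigraph m"
  shows "degree m v = (\<Sum>u\<in>{u. u \<noteq> v}. m {u, v})"
proof -
  have "degree m v = (\<Sum>e\<in>{e. card e = 2 \<and> v \<in> e \<and> True}. m e)"
    unfolding degree_def using assms
    by (intro sum.mono_neutral_right) (auto simp: loopless_multigraph_def)
  then show ?thesis using sum_edges_at[where P="\<lambda>_. True" and f=m] by simp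
qed

lemma sum_col_degree_eq_degree:
  assumes "loopless_multigraph m" "psi \<in> colorings c"
  shows "(\<Sum>l=1..c+1. col_degree m psi l v) = degree m v"
proof -
  have "(\<Sum>l=1..c+1. col_degree m psi l v) =
        (\<Sum>l=1..c+1. \<Sum>u\<in>{u. u \<noteq> v}. if psi u = l then m {u, v} else 0)"
    unfolding col_degree_def
    by (rule sum.cong[OF refl], subst sum.inter_filter[symmetric]) (auto intro: sum.cong)
  also have "\<dots> = (\<Sum>u\<in>{u. u \<noteq> v}. \<Sum>l=1..c+1. if psi u = l then m {u, v} else 0)"
    by (rule sum.swap)
  also have "\<dots> = (\<Sum>u\<in>{u. u \<noteq> v}. m {u, v})"
  proof (rule sum.cong[OF refl])
    fix u
    have "psi u \<in> {1..c+1}" using assms(2) by (auto simp: colorings_def)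
    then show "(\<Sum>l=1..c+1. if psi u = l then m {u, v} else 0) = m {u, v}" by simp
  qed
  finally show ?thesis using degree_eq_sum_nbrs[OF assms(1)] by simp
qed

lemma finite_colorings: "finite (colorings c :: ('a::finite \<Rightarrow> nat) set)"
proof -
  have "colorings c = (PiE UNIV (\<lambda>_. {1..c+1}) :: ('a \<Rightarrow> nat) set)"
    by (auto simp: colorings_def PiE_UNIV_domain)
  then show ?thesis by (simp add: finite_PiE)
qed

lemma fun_upd_in_colorings: "psi \<in> colorings c \<Longrightarrow> l \<in> {1..c+1} \<Longrightarrow> psi(v := l) \<in> colorings c"
  by (auto simp: colorings_def)

locale partition_problem =
  fixes m :: "'a::finite set \<Rightarrow> nat" and D c :: nat and \<alpha> :: "nat \<Rightarrow> nat"
  assumes loopless: "loopless_multigraph m"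
    and max_degree_le: "max_degree m \<le> D"
    and D_eq: "D = (\<Sum>i=1..c+1. \<alpha> i)"
    and alpha_ge_2: "i \<in> {1..c+1} \<Longrightarrow> \<alpha> i \<ge> 2"
begin

definition mono_clique :: "('a \<Rightarrow> nat) \<Rightarrow> 'a set \<Rightarrow> nat \<Rightarrow> bool" where
  "mono_clique psi K i \<longleftrightarrow>
     i \<in> {1..c+1} \<and> is_clique m K \<and> card K = \<alpha> i + 1 \<and> (\<forall>v\<in>K. psi v = i)"

definition mono_cliques :: "('a \<Rightarrow> nat) \<Rightarrow> 'a set set" where
  "mono_cliques psi = {K. \<exists>i. mono_clique psi K i}"

definition Phi_minimizers :: "('a \<Rightarrow> nat) set" where
  "Phi_minimizers = {psi \<in> colorings c. Phi m c \<alpha> psi = Min (Phi m c \<alpha> ` colorings c)}"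

definition optimal_colorings :: "('a \<Rightarrow> nat) set" where
  "optimal_colorings = {psi \<in> Phi_minimizers.
     \<forall>psi'\<in>Phi_minimizers. card (mono_cliques psi) \<le> card (mono_cliques psi')}"

lemma degree_le: "degree m v \<le> D"
proof -
  have "degree m v \<le> max_degree m" unfolding max_degree_def by (rule Max_ge) auto
  then show ?thesis using max_degree_le by simp
qed

lemma Phi_minimizer_le: "psi \<in> Phi_minimizers \<Longrightarrow> psi' \<in> colorings c \<Longrightarrow> Phi m c \<alpha> psi \<le> Phi m c \<alpha> psi'"
  unfolding Phi_minimizers_def using finite_colorings[of c] by (auto intro!: Min_le)

lemma ex_optimal_coloring: "\<exists>psi. psi \<in> optimal_colorings"
proof -
  have "(\<lambda>_. 1) \<in> (colorings c :: ('a \<Rightarrow> nat) set)" by (auto simp: colorings_def)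
  then have "Min (Phi m c \<alpha> ` colorings c) \<in> Phi m c \<alpha> ` colorings c"
    using finite_colorings by (intro Min_in) auto
  then obtain psi where "psi \<in> Phi_minimizers" by (auto simp: Phi_minimizers_def)
  then show ?thesis unfolding optimal_colorings_def
    using ex_has_least_nat[where P="\<lambda>psi. psi \<in> Phi_minimizers" and m="\<lambda>psi. card (mono_cliques psi)"]
    by blast
qed

lemma optimal_colorings_le:
  "psi \<in> optimal_colorings \<Longrightarrow> psi' \<in> Phi_minimizers \<Longrightarrow> card (mono_cliques psi) \<le> card (mono_cliques psi')"
  by (auto simp: optimal_colorings_def)

lemma optimal_imp_Phi_minimizer: "psi \<in> optimal_colorings \<Longrightarrow> psi \<in> Phi_minimizers"
  by (simp add: optimal_colorings_def)

lemma Phi_minimizer_in_colorings: "psi \<in> Phi_minimizers \<Longrightarrow> psi \<in> colorings c"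
  by (simp add: Phi_minimizers_def)

context
  fixes psi K i v
  assumes minimizer: "psi \<in> Phi_minimizers" and K: "mono_clique psi K i" and v: "v \<in> K"
begin

lemma clique_nbrs_subset: "K - {v} \<subseteq> col_nbrs m psi i v"
  using K v unfolding mono_clique_def is_clique_def col_nbrs_def by auto

text \<open>Moving \<open>v\<close> to colour \<open>j\<close> cannot decrease \<open>Phi\<close>, so the ratio
  \<open>col_degree j v / \<alpha> j\<close> is at least \<open>col_degree i v / \<alpha> i \<ge> 1\<close>; as these
  degrees add up to at most \<open>D = (\<Sum>j. \<alpha> j)\<close>, all the inequalities are equalities.\<close>
lemma Phi_minimizer_col_degree:
  assumes j: "j \<in> {1..c+1}"
  shows "col_degree m psi j v = \<alpha> j"
proof -
  have coloring: "psi \<in> colorings c" using minimizer by (rule Phi_minimizer_in_colorings)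
  have i: "i \<in> {1..c+1}" and psi_v: "psi v = i" using K v by (auto simp: mono_clique_def)
  have "\<alpha> i = card (K - {v})" using K v by (simp add: mono_clique_def)
  also have "\<dots> \<le> card (col_nbrs m psi i v)" by (intro card_mono clique_nbrs_subset) simp
  also have "\<dots> \<le> col_degree m psi i v" by (rule card_col_nbrs_le_col_degree)
  finally have ge_i: "\<alpha> i \<le> col_degree m psi i v" .
  have ge: "\<alpha> l \<le> col_degree m psi l v" if l: "l \<in> {1..c+1}" for l
  proof (cases "l = i")
    case False
    have "Phi m c \<alpha> psi \<le> Phi m c \<alpha> (psi(v := l))"
      using minimizer fun_upd_in_colorings[OF coloring l] by (rule Phi_minimizer_le)
    then have "real (col_degree m psi i v) / real (\<alpha> i) \<le> real (col_degree m psi l v) / real (\<alpha> l)"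
      using Phi_fun_upd[OF coloring psi_v l] False by simp
    moreover have "1 \<le> real (col_degree m psi i v) / real (\<alpha> i)"
      using ge_i alpha_ge_2[OF i] by simp
    ultimately have "1 \<le> real (col_degree m psi l v) / real (\<alpha> l)" by linarith
    then show ?thesis using alpha_ge_2[OF l] by (simp add: le_divide_eq)
  qed (use ge_i in simp)
  show ?thesis
  proof (rule ccontr)
    assume "col_degree m psi j v \<noteq> \<alpha> j"
    then have "\<alpha> j < col_degree m psi j v" using ge[OF j] by simp
    then have "(\<Sum>l=1..c+1. \<alpha> l) < (\<Sum>l=1..c+1. col_degree m psi l v)"
      using ge j by (intro sum_strict_mono_ex1) auto
    then show False
      using sum_col_degree_eq_degree[OF loopless coloring, of v] degree_le[of v] D_eq by simp
  qed
qed

lemma Phi_minimizer_col_nbrs_le: "l \<in> {1..c+1} \<Longrightarrow> card (col_nbrs m psi l v) \<le> \<alpha> l"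
  using card_col_nbrs_le_col_degree Phi_minimizer_col_degree by metis

lemma Phi_minimizer_col_nbrs_eq_clique: "col_nbrs m psi i v = K - {v}"
proof (rule card_subset_eq[OF _ clique_nbrs_subset, symmetric])
  have "i \<in> {1..c+1}" "card K = \<alpha> i + 1" using K by (auto simp: mono_clique_def)
  then show "card (K - {v}) = card (col_nbrs m psi i v)"
    using card_mono[OF _ clique_nbrs_subset] Phi_minimizer_col_nbrs_le[of i] v by simp
qed simp

lemma Phi_minimizer_recolor:
  assumes l: "l \<in> {1..c+1}"
  shows "psi(v := l) \<in> Phi_minimizers"
proof (cases "l = i")
  case True
  then show ?thesis using minimizer K v by (auto simp: mono_clique_def fun_upd_idem)
next
  case False
  have coloring: "psi \<in> colorings c" using minimizer by (rule Phi_minimizer_in_colorings)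
  have i: "i \<in> {1..c+1}" and psi_v: "psi v = i" using K v by (auto simp: mono_clique_def)
  have "Phi m c \<alpha> (psi(v := l)) = Phi m c \<alpha> psi"
    using Phi_fun_upd[OF coloring psi_v l] False Phi_minimizer_col_degree[OF i]
      Phi_minimizer_col_degree[OF l] alpha_ge_2[OF i] alpha_ge_2[OF l] by simp
  then show ?thesis
    using minimizer fun_upd_in_colorings[OF coloring l] by (simp add: Phi_minimizers_def)
qed

lemma mono_cliques_recolor_subset:
  assumes l: "l \<in> {1..c+1}" and l_ne_i: "l \<noteq> i"
  shows "mono_cliques (psi(v := l)) \<subseteq> insert (insert v (col_nbrs m psi l v)) (mono_cliques psi - {K})"
proof
  fix K' assume "K' \<in> mono_cliques (psi(v := l))"
  then obtain j where K': "mono_clique (psi(v := l)) K' j" by (auto simp: mono_cliques_def)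
  show "K' \<in> insert (insert v (col_nbrs m psi l v)) (mono_cliques psi - {K})"
  proof (cases "v \<in> K'")
    case False
    then have "mono_clique psi K' j" using K' by (auto simp: mono_clique_def)
    moreover have "K' \<noteq> K" using False v by auto
    ultimately show ?thesis by (auto simp: mono_cliques_def)
  next
    case True
    then have "j = l" using K' by (auto simp: mono_clique_def)
    then have sub: "K' - {v} \<subseteq> col_nbrs m psi l v"
      using K' True unfolding mono_clique_def is_clique_def col_nbrs_def
      by (auto simp: insert_commute)
    have "card (K' - {v}) = \<alpha> l" using K' True \<open>j = l\<close> by (simp add: mono_clique_def)
    then have "K' - {v} = col_nbrs m psi l v"
      using card_subset_eq[OF _ sub] Phi_minimizer_col_nbrs_le[OF l] card_mono[OF _ sub] by simp
    then show ?thesis using True by auto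
  qed
qed

end

text \<open>The number of monochromatic cliques cannot drop, so recolouring \<open>v\<close> must
  create the only candidate for a new one.\<close>
lemma optimal_recolor_other_color:
  assumes optimal: "psi \<in> optimal_colorings" and K: "mono_clique psi K i" and v: "v \<in> K"
    and l: "l \<in> {1..c+1}" and l_ne_i: "l \<noteq> i"
  shows "psi(v := l) \<in> optimal_colorings"
    and "mono_clique (psi(v := l)) (insert v (col_nbrs m psi l v)) l"
proof -
  let ?N = "insert v (col_nbrs m psi l v)"
  have minimizer: "psi \<in> Phi_minimizers" using optimal by (rule optimal_imp_Phi_minimizer)
  have minimizer': "psi(v := l) \<in> Phi_minimizers"
    using Phi_minimizer_recolor[OF minimizer K v l] .
  have sub: "mono_cliques (psi(v := l)) \<subseteq> insert ?N (mono_cliques psi - {K})"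
    using mono_cliques_recolor_subset[OF minimizer K v l l_ne_i] .
  have K_in: "K \<in> mono_cliques psi" using K by (auto simp: mono_cliques_def)
  have "card (mono_cliques (psi(v := l))) \<le> card (insert ?N (mono_cliques psi - {K}))"
    using sub by (intro card_mono) auto
  also have "\<dots> \<le> card (mono_cliques psi)"
    using K_in card_Diff1_less[of "mono_cliques psi" K] by (simp add: card_insert_if)
  finally show "psi(v := l) \<in> optimal_colorings"
    using optimal minimizer' by (auto simp: optimal_colorings_def)
  have "?N \<in> mono_cliques (psi(v := l))"
  proof (rule ccontr)
    assume "?N \<notin> mono_cliques (psi(v := l))"
    then have "card (mono_cliques (psi(v := l))) \<le> card (mono_cliques psi - {K})"
      using sub by (intro card_mono) auto
    also have "\<dots> < card (mono_cliques psi)"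
      using K_in by (intro card_Diff1_less) auto
    finally show False using optimal_colorings_le[OF optimal minimizer'] by simp
  qed
  then obtain j where "mono_clique (psi(v := l)) ?N j" by (auto simp: mono_cliques_def)
  moreover from this have "j = l" by (auto simp: mono_clique_def)
  ultimately show "mono_clique (psi(v := l)) ?N l" by simp
qed

lemma optimal_recolor:
  assumes optimal: "psi \<in> optimal_colorings" and K: "mono_clique psi K i" and v: "v \<in> K"
    and l: "l \<in> {1..c+1}"
  shows "psi(v := l) \<in> optimal_colorings"
    and "mono_clique (psi(v := l)) (insert v (col_nbrs m psi l v)) l"
proof -
  have "psi(v := l) \<in> optimal_colorings \<and> mono_clique (psi(v := l)) (insert v (col_nbrs m psi l v)) l"
  proof (cases "l = i")
    case True
    have "insert v (col_nbrs m psi l v) = K"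
      using Phi_minimizer_col_nbrs_eq_clique[OF optimal_imp_Phi_minimizer[OF optimal] K v] v True by auto
    moreover have "psi(v := l) = psi" using K v True by (auto simp: mono_clique_def)
    ultimately show ?thesis using optimal K True by simp
  qed (use optimal_recolor_other_color[OF assms] in simp)
  then show "psi(v := l) \<in> optimal_colorings"
    and "mono_clique (psi(v := l)) (insert v (col_nbrs m psi l v)) l" by auto
qed

lemma optimal_card_col_nbrs:
  assumes "psi \<in> optimal_colorings" "mono_clique psi K i" "v \<in> K" "l \<in> {1..c+1}"
  shows "card (col_nbrs m psi l v) = \<alpha> l"
proof -
  have "v \<notin> col_nbrs m psi l v" by (simp add: col_nbrs_def)
  then show ?thesis using optimal_recolor(2)[OF assms] by (simp add: mono_clique_def)
qed

end

text \<open>A walk in which \<open>xs j\<close> lies in the clique \<open>step_clique xs j\<close> of colour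
  \<open>alt_color j\<close>, monochromatic for \<open>recolored xs j\<close>, the colouring obtained from
  \<open>psi1\<close> by swapping the colours \<open>a\<close> and \<open>b\<close> on \<open>xs 1, \<dots>, xs (j - 1)\<close>. The next
  clique consists of \<open>xs j\<close> and its neighbours of the other colour; the walk is
  indexed from 1, and \<open>C1\<close> serves as the first clique.\<close>
locale recoloring_walk = partition_problem m D c \<alpha> for m :: "'a::finite set \<Rightarrow> nat" and D c \<alpha> +
  fixes psi1 :: "'a \<Rightarrow> nat" and C1 :: "'a set" and a b :: nat and x1 x2 :: 'a
  assumes psi1_optimal: "psi1 \<in> optimal_colorings"
    and C1_mono: "mono_clique psi1 C1 a" and x1_in_C1: "x1 \<in> C1"
    and b_range: "b \<in> {1..c+1}" and a_ne_b: "a \<noteq> b"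
    and x2_nbr: "x2 \<in> col_nbrs m psi1 b x1"
    and nonadjacent: "\<exists>z\<in>C1 - {x1}. \<not> 0 < m {z, x2}"
begin

definition alt_color :: "nat \<Rightarrow> nat" where
  "alt_color j = (if odd j then a else b)"

definition recolored :: "(nat \<Rightarrow> 'a) \<Rightarrow> nat \<Rightarrow> 'a \<Rightarrow> nat" where
  "recolored xs j = (\<lambda>v. if v \<in> xs ` {1..<j} then (if psi1 v = a then b else a) else psi1 v)"

definition step_nbrs :: "(nat \<Rightarrow> 'a) \<Rightarrow> nat \<Rightarrow> 'a set" where
  "step_nbrs xs j = col_nbrs m (recolored xs (j - 1)) (alt_color j) (xs (j - 1))"

definition step_clique :: "(nat \<Rightarrow> 'a) \<Rightarrow> nat \<Rightarrow> 'a set" where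
  "step_clique xs j = (if j = 1 then C1 else insert (xs (j - 1)) (step_nbrs xs j))"

definition visited :: "(nat \<Rightarrow> 'a) \<Rightarrow> nat \<Rightarrow> 'a set" where
  "visited xs n = (\<Union>j\<in>{1..n}. step_clique xs j)"

definition valid_walk :: "(nat \<Rightarrow> 'a) \<Rightarrow> nat \<Rightarrow> bool" where
  "valid_walk xs n \<longleftrightarrow> xs 1 = x1 \<and> xs 2 = x2 \<and>
     (\<forall>j\<in>{1..n}. recolored xs j \<in> optimal_colorings \<and>
        mono_clique (recolored xs j) (step_clique xs j) (alt_color j) \<and> xs j \<in> step_clique xs j) \<and>
     (\<forall>j\<in>{2..n}. xs j \<in> step_nbrs xs j \<and> step_nbrs xs j \<inter> visited xs (j - 1) = {})"

lemma a_range: "a \<in> {1..c+1}"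
  using C1_mono by (simp add: mono_clique_def)

lemma alt_color_range: "alt_color j \<in> {1..c+1}"
  using a_range b_range by (simp add: alt_color_def)

lemma alt_color_2: "alt_color 2 = b"
  by (simp add: alt_color_def)

lemma alt_color_Suc: "alt_color (Suc j) = (if alt_color j = a then b else a)"
  using a_ne_b by (auto simp: alt_color_def)

lemma alt_color_eq_iff: "alt_color i = alt_color j \<longleftrightarrow> (odd i \<longleftrightarrow> odd j)"
  using a_ne_b by (auto simp: alt_color_def)

lemma alt_color_Suc_neq: "alt_color (Suc j) \<noteq> alt_color j"
  using a_ne_b by (auto simp: alt_color_def)

lemma recolored_unmoved: "v \<notin> xs ` {1..<j} \<Longrightarrow> recolored xs j v = psi1 v"
  by (simp add: recolored_def)

lemma recolored_1: "recolored xs 1 = psi1"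
  by (rule ext) (simp add: recolored_def)

lemma step_nbrs_2: "xs 1 = x1 \<Longrightarrow> step_nbrs xs 2 = col_nbrs m psi1 b x1"
  using recolored_1[of xs] by (simp add: step_nbrs_def alt_color_def)

lemma step_clique_subset_visited: "j \<in> {1..n} \<Longrightarrow> step_clique xs j \<subseteq> visited xs n"
  by (auto simp: visited_def)

context
  fixes xs :: "nat \<Rightarrow> 'a" and n :: nat
  assumes walk: "valid_walk xs n"
begin

lemma walk_recolored_optimal: "j \<in> {1..n} \<Longrightarrow> recolored xs j \<in> optimal_colorings"
  and walk_mono_clique: "j \<in> {1..n} \<Longrightarrow> mono_clique (recolored xs j) (step_clique xs j) (alt_color j)"
  and walk_in_step_clique: "j \<in> {1..n} \<Longrightarrow> xs j \<in> step_clique xs j"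
  and walk_in_step_nbrs: "j \<in> {2..n} \<Longrightarrow> xs j \<in> step_nbrs xs j"
  and walk_step_nbrs_fresh: "j \<in> {2..n} \<Longrightarrow> step_nbrs xs j \<inter> visited xs (j - 1) = {}"
  and walk_1: "xs 1 = x1" and walk_2: "xs 2 = x2"
  using walk by (auto simp: valid_walk_def)

lemma walk_in_visited: "i \<in> {1..j} \<Longrightarrow> j \<le> n \<Longrightarrow> xs i \<in> visited xs j"
  using walk_in_step_clique[of i] by (auto simp: visited_def)

lemma walk_notin_visited: "j \<in> {2..n} \<Longrightarrow> xs j \<notin> visited xs (j - 1)"
  using walk_in_step_nbrs walk_step_nbrs_fresh by blast

lemma walk_distinct: "i \<in> {1..<j} \<Longrightarrow> j \<le> n \<Longrightarrow> xs i \<noteq> xs j"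
proof
  assume i: "i \<in> {1..<j}" and j: "j \<le> n" and eq: "xs i = xs j"
  have "xs i \<in> visited xs (j - 1)" using i j by (intro walk_in_visited) auto
  then show False using walk_notin_visited[of j] i j eq by auto
qed

lemma walk_notin_earlier: "j \<le> n \<Longrightarrow> xs j \<notin> xs ` {1..<j}"
  using walk_distinct by fastforce

lemma psi1_step_clique:
  "j \<in> {1..n} \<Longrightarrow> u \<in> step_clique xs j \<Longrightarrow> u \<notin> xs ` {1..<j} \<Longrightarrow> psi1 u = alt_color j"
  using walk_mono_clique[of j] recolored_unmoved[of u xs j] by (auto simp: mono_clique_def)

lemma psi1_walk: "j \<in> {1..n} \<Longrightarrow> psi1 (xs j) = alt_color j"
  using psi1_step_clique walk_in_step_clique walk_notin_earlier by simp

lemma recolored_moved: "i \<in> {1..<j} \<Longrightarrow> i \<le> n \<Longrightarrow> recolored xs j (xs i) = alt_color (Suc i)"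
  using psi1_walk[of i] alt_color_Suc[of i] by (auto simp: recolored_def)

lemma col_nbrs_step_clique:
  "j \<in> {1..n} \<Longrightarrow> u \<in> step_clique xs j \<Longrightarrow>
     col_nbrs m (recolored xs j) (alt_color j) u = step_clique xs j - {u}"
  using Phi_minimizer_col_nbrs_eq_clique[OF optimal_imp_Phi_minimizer] walk_recolored_optimal
    walk_mono_clique by blast

lemma first_clique_nbr_notin_walk:
  assumes y: "y \<in> C1" "y \<notin> xs ` {1..<n}" and w: "psi1 w = b" "0 < m {w, y}"
  shows "w \<notin> xs ` {1..<n}"
proof
  assume "w \<in> xs ` {1..<n}"
  then obtain i where i: "i \<in> {1..<n}" "w = xs i" by auto
  have "alt_color i = b" using psi1_walk[of i] i w by simp
  then have alt_Suc: "alt_color (Suc i) = a" using alt_color_Suc[of i] a_ne_b by simp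
  have psi1_y: "psi1 y = a" using C1_mono y(1) by (simp add: mono_clique_def)
  moreover have "y \<notin> xs ` {1..<i}" using y(2) i by auto
  ultimately have "recolored xs i y = a" using recolored_unmoved by simp
  moreover have "y \<noteq> xs i" using psi1_y w i a_ne_b by auto
  ultimately have "y \<in> step_nbrs xs (Suc i)"
    using w i alt_Suc by (simp add: step_nbrs_def col_nbrs_def insert_commute)
  moreover have "y \<in> visited xs i"
    using step_clique_subset_visited[of 1 i xs] i y(1) by (auto simp: step_clique_def)
  ultimately show False using walk_step_nbrs_fresh[of "Suc i"] i by auto
qed

context
  assumes n_ge_2: "n \<ge> 2"
begin

lemma step_nbrs_Suc: "step_nbrs xs (Suc n) = col_nbrs m (recolored xs n) (alt_color (Suc n)) (xs n)"
  by (simp add: step_nbrs_def)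

lemma step_clique_Suc: "step_clique xs (Suc n) = insert (xs n) (step_nbrs xs (Suc n))"
  using n_ge_2 by (simp add: step_clique_def)

lemma recolored_Suc: "recolored xs (Suc n) = (recolored xs n)(xs n := alt_color (Suc n))"
proof
  fix v
  show "recolored xs (Suc n) v = ((recolored xs n)(xs n := alt_color (Suc n))) v"
  proof (cases "v = xs n")
    case True
    then show ?thesis using recolored_moved[of n "Suc n"] n_ge_2 by simp
  next
    case False
    have "{1..<Suc n} = insert n {1..<n}" using n_ge_2 by auto
    then show ?thesis using False by (simp add: recolored_def)
  qed
qed

lemma recolored_Suc_optimal: "recolored xs (Suc n) \<in> optimal_colorings"
  and mono_clique_step_clique_Suc:
    "mono_clique (recolored xs (Suc n)) (step_clique xs (Suc n)) (alt_color (Suc n))"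
  and card_step_nbrs_Suc: "card (step_nbrs xs (Suc n)) = \<alpha> (alt_color (Suc n))"
proof -
  have n: "n \<in> {1..n}" using n_ge_2 by simp
  note recolor = walk_recolored_optimal[OF n] walk_mono_clique[OF n] walk_in_step_clique[OF n]
    alt_color_range[of "Suc n"]
  show "recolored xs (Suc n) \<in> optimal_colorings"
    using optimal_recolor(1)[OF recolor] by (simp add: recolored_Suc)
  show "mono_clique (recolored xs (Suc n)) (step_clique xs (Suc n)) (alt_color (Suc n))"
    using optimal_recolor(2)[OF recolor] by (simp add: recolored_Suc step_clique_Suc step_nbrs_Suc)
  show "card (step_nbrs xs (Suc n)) = \<alpha> (alt_color (Suc n))"
    using optimal_card_col_nbrs[OF recolor] by (simp add: step_nbrs_Suc)
qed

lemma earlier_walk_notin_step_nbrs_Suc: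
  assumes l: "l \<in> {1..<n}"
  shows "xs l \<notin> step_nbrs xs (Suc n)"
proof
  assume "xs l \<in> step_nbrs xs (Suc n)"
  then have color_l: "recolored xs n (xs l) = alt_color (Suc n)" and adj: "0 < m {xs l, xs n}"
    by (auto simp: step_nbrs_Suc col_nbrs_def)
  have "recolored xs n (xs l) = alt_color (Suc l)" using recolored_moved[of l n] l by simp
  then have same_color: "alt_color l = alt_color n" using color_l by (simp add: alt_color_eq_iff)
  have l': "l \<in> {1..n}" using l by simp
  have "xs n \<notin> xs ` {1..<l}" using walk_notin_earlier[of n] l by auto
  then have "recolored xs l (xs n) = alt_color l"
    using recolored_unmoved psi1_walk[of n] n_ge_2 same_color by simp
  then have "xs n \<in> col_nbrs m (recolored xs l) (alt_color l) (xs l)"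
    using adj walk_distinct[of l n] l by (auto simp: col_nbrs_def insert_commute)
  then have "xs n \<in> step_clique xs l" using col_nbrs_step_clique[OF l' walk_in_step_clique[OF l']] by auto
  moreover have "step_clique xs l \<subseteq> visited xs (n - 1)" using l by (intro step_clique_subset_visited) auto
  ultimately show False using walk_notin_visited[of n] n_ge_2 by auto
qed

lemma step_nbrs_Suc_unmoved:
  assumes w: "w \<in> step_nbrs xs (Suc n)"
  shows "w \<notin> xs ` {1..<Suc n}" and "psi1 w = alt_color (Suc n)"
proof -
  have "w \<noteq> xs n" using w by (auto simp: step_nbrs_Suc col_nbrs_def)
  moreover have w_unmoved: "w \<notin> xs ` {1..<n}" using earlier_walk_notin_step_nbrs_Suc w by auto
  ultimately show "w \<notin> xs ` {1..<Suc n}" using less_Suc_eq by auto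
  have "recolored xs n w = alt_color (Suc n)" using w by (auto simp: step_nbrs_Suc col_nbrs_def)
  then show "psi1 w = alt_color (Suc n)" using recolored_unmoved[OF w_unmoved] by simp
qed

lemma step_nbrs_Suc_eq_step_clique:
  assumes u: "u \<in> step_nbrs xs (Suc n)" and j: "j \<in> {1..n}" and u_in: "u \<in> step_clique xs j"
  shows "j < n" and "alt_color j = alt_color (Suc n)"
    and "step_nbrs xs (Suc n) = step_clique xs j - {xs j}"
proof -
  have "u \<notin> xs ` {1..<j}" using step_nbrs_Suc_unmoved(1)[OF u] j by auto
  then show same_color: "alt_color j = alt_color (Suc n)"
    using psi1_step_clique[OF j u_in] step_nbrs_Suc_unmoved(2)[OF u] by simp
  then show j_less: "j < n" using j alt_color_Suc_neq[of n] by (cases "j = n") auto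
  have sub: "step_nbrs xs (Suc n) \<subseteq> step_clique xs j - {xs j}"
  proof
    fix w assume w: "w \<in> step_nbrs xs (Suc n)"
    have w_unmoved: "w \<notin> xs ` {1..<Suc n}" and psi1_w: "psi1 w = alt_color (Suc n)"
      using step_nbrs_Suc_unmoved[OF w] by auto
    have "w \<in> step_clique xs j"
    proof (cases "w = u")
      case False
      have "0 < m {w, u}"
        using mono_clique_step_clique_Suc w u False
        by (auto simp: mono_clique_def is_clique_def step_clique_Suc)
      moreover have "w \<notin> xs ` {1..<j}" using w_unmoved j_less by auto
      then have "recolored xs j w = alt_color j"
        using recolored_unmoved psi1_w same_color by simp
      ultimately have "w \<in> col_nbrs m (recolored xs j) (alt_color j) u"
        using False by (simp add: col_nbrs_def)
      then show ?thesis using col_nbrs_step_clique[OF j u_in] by auto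
    qed (use u_in in simp)
    moreover have "w \<noteq> xs j" using w_unmoved j j_less by auto
    ultimately show "w \<in> step_clique xs j - {xs j}" by simp
  qed
  have "card (step_clique xs j - {xs j}) = \<alpha> (alt_color j)"
    using walk_mono_clique[OF j] walk_in_step_clique[OF j] by (simp add: mono_clique_def)
  then show "step_nbrs xs (Suc n) = step_clique xs j - {xs j}"
    using card_subset_eq[OF _ sub] card_step_nbrs_Suc same_color by simp
qed

text \<open>After recolouring \<open>y\<close>, both \<open>w\<close> and \<open>x1\<close> (recoloured at the first step) are
  \<open>b\<close>-coloured clique mates of \<open>y\<close>.\<close>
lemma first_clique_nbr_in_second_clique:
  assumes y: "y \<in> step_nbrs xs (Suc n)" "y \<in> C1" "y \<noteq> x1"
    and w: "w \<in> col_nbrs m psi1 b y" "w \<notin> xs ` {1..<Suc n}"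
  shows "w \<in> step_clique xs 2"
proof -
  have "psi1 y = a" using C1_mono y(2) by (simp add: mono_clique_def)
  then have a_Suc: "alt_color (Suc n) = a" using step_nbrs_Suc_unmoved(2)[OF y(1)] by simp
  have psi1_w: "psi1 w = b" using w(1) by (simp add: col_nbrs_def)
  then have "recolored xs (Suc n) w = b" using recolored_unmoved[OF w(2)] by simp
  then have w_nbr: "w \<in> col_nbrs m (recolored xs (Suc n)) b y" using w(1) by (simp add: col_nbrs_def)
  have "recolored xs (Suc n) x1 = b"
    using recolored_moved[of 1 "Suc n"] n_ge_2 walk_1 by (simp add: alt_color_def)
  moreover have "0 < m {x1, y}" using C1_mono x1_in_C1 y by (auto simp: mono_clique_def is_clique_def)
  ultimately have x1_nbr: "x1 \<in> col_nbrs m (recolored xs (Suc n)) b y"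
    using y(3) by (simp add: col_nbrs_def)
  have "mono_clique ((recolored xs (Suc n))(y := b)) (insert y (col_nbrs m (recolored xs (Suc n)) b y)) b"
    using optimal_recolor(2)[OF recolored_Suc_optimal mono_clique_step_clique_Suc _ b_range] y(1) a_Suc
    by (simp add: step_clique_Suc)
  moreover have "w \<noteq> x1" using psi1_w C1_mono x1_in_C1 a_ne_b by (auto simp: mono_clique_def)
  ultimately have "0 < m {w, x1}" using w_nbr x1_nbr by (auto simp: mono_clique_def is_clique_def)
  then have "w \<in> step_nbrs xs 2"
    using psi1_w \<open>w \<noteq> x1\<close> by (simp add: step_nbrs_2[of xs, OF walk_1] col_nbrs_def)
  then show ?thesis by (simp add: step_clique_def)
qed

text \<open>If the walk re-entered \<open>C1\<close> at \<open>y\<close> after more than two steps, a \<open>b\<close>-coloured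
  neighbour \<open>w \<noteq> xs n\<close> of \<open>y\<close> would lie in the second clique, and with it its clique
  mate \<open>xs n\<close>, contradicting freshness.\<close>
lemma step_nbrs_Suc_meets_first_clique:
  assumes y: "y \<in> step_nbrs xs (Suc n)" "y \<in> C1" "y \<noteq> x1"
  shows "n = 2"
proof (rule ccontr)
  assume "n \<noteq> 2"
  have "psi1 y = a" using C1_mono y(2) by (simp add: mono_clique_def)
  then have "alt_color (Suc n) = a" using step_nbrs_Suc_unmoved(2)[OF y(1)] by simp
  then have "even n" using a_ne_b by (auto simp: alt_color_def split: if_splits)
  with \<open>n \<noteq> 2\<close> n_ge_2 have n_ge_4: "n \<ge> 4" by presburger
  have psi1_xs_n: "psi1 (xs n) = b" using psi1_walk[of n] n_ge_2 \<open>even n\<close> by (simp add: alt_color_def)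
  have xs_n_nbr: "xs n \<in> col_nbrs m psi1 b y"
    using y(1) psi1_xs_n by (auto simp: step_nbrs_Suc col_nbrs_def insert_commute)
  have "card (col_nbrs m psi1 b y) = \<alpha> b"
    using optimal_card_col_nbrs[OF psi1_optimal C1_mono y(2) b_range] .
  then have "card (col_nbrs m psi1 b y - {xs n}) \<noteq> 0"
    using xs_n_nbr alpha_ge_2[OF b_range] by simp
  then obtain w where w_nbr: "w \<in> col_nbrs m psi1 b y" and w_ne: "w \<noteq> xs n"
    by (metis card.empty Diff_eq_empty_iff subsetI singletonI)
  have psi1_w: "psi1 w = b" and adj_wy: "0 < m {w, y}" using w_nbr by (auto simp: col_nbrs_def)
  have "y \<notin> xs ` {1..<n}" using step_nbrs_Suc_unmoved(1)[OF y(1)] by auto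
  then have "w \<notin> xs ` {1..<n}" using first_clique_nbr_notin_walk[OF y(2) _ psi1_w adj_wy] by blast
  then have "w \<notin> xs ` {1..<Suc n}" using w_ne less_Suc_eq by auto
  then have w_in: "w \<in> step_clique xs 2" using first_clique_nbr_in_second_clique[OF y w_nbr] by blast
  have "mono_clique (psi1(y := b)) (insert y (col_nbrs m psi1 b y)) b"
    using optimal_recolor(2)[OF psi1_optimal C1_mono y(2) b_range] .
  then have "0 < m {xs n, w}" using w_nbr xs_n_nbr w_ne by (auto simp: mono_clique_def is_clique_def)
  moreover have "xs n \<notin> xs ` {1..<2}" using walk_notin_earlier[of n] n_ge_2 by auto
  then have "recolored xs 2 (xs n) = alt_color 2" using recolored_unmoved psi1_xs_n alt_color_2 by simp
  ultimately have "xs n \<in> col_nbrs m (recolored xs 2) (alt_color 2) w" using w_ne by (simp add: col_nbrs_def)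
  then have "xs n \<in> step_clique xs 2" using col_nbrs_step_clique[of 2 w] n_ge_2 w_in by auto
  moreover have "step_clique xs 2 \<subseteq> visited xs (n - 1)" using n_ge_4 by (intro step_clique_subset_visited) auto
  ultimately show False using walk_notin_visited[of n] n_ge_2 by auto
qed

lemma step_nbrs_Suc_fresh: "step_nbrs xs (Suc n) \<inter> visited xs n = {}"
proof (rule ccontr)
  assume "step_nbrs xs (Suc n) \<inter> visited xs n \<noteq> {}"
  then obtain u j where u: "u \<in> step_nbrs xs (Suc n)" and j: "j \<in> {1..n}" and u_in: "u \<in> step_clique xs j"
    unfolding visited_def by blast
  note clique_eq = step_nbrs_Suc_eq_step_clique[OF u j u_in]
  show False
  proof (cases "j = 1")
    case False
    have "xs (j - 1) \<in> step_clique xs j" using False by (simp add: step_clique_def)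
    moreover have "j - 1 \<in> {1..<j}" using j False by auto
    then have "xs (j - 1) \<noteq> xs j" using walk_distinct j by simp
    ultimately have "xs (j - 1) \<in> step_nbrs xs (Suc n)" using clique_eq(3) by simp
    moreover have "j - 1 \<in> {1..<n}" using j clique_eq(1) False by auto
    ultimately show False using earlier_walk_notin_step_nbrs_Suc by blast
  next
    case True
    then have first: "step_nbrs xs (Suc n) = C1 - {x1}" using clique_eq(3) walk_1 by (simp add: step_clique_def)
    obtain z where z: "z \<in> C1 - {x1}" "\<not> 0 < m {z, x2}" using nonadjacent by blast
    then have z_nbr: "z \<in> step_nbrs xs (Suc n)" using first by simp
    then have "0 < m {z, xs n}" by (auto simp: step_nbrs_Suc col_nbrs_def)
    moreover have "n = 2" using step_nbrs_Suc_meets_first_clique z_nbr z(1) by blast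
    ultimately show False using z(2) walk_2 by simp
  qed
qed

end

end

end

context recoloring_walk
begin

lemma recolored_cong: "\<forall>i\<le>n. ys i = xs i \<Longrightarrow> j \<le> Suc n \<Longrightarrow> recolored ys j = recolored xs j"
proof -
  assume agree: "\<forall>i\<le>n. ys i = xs i" and j: "j \<le> Suc n"
  have "ys ` {1..<j} = xs ` {1..<j}" using agree j by (intro image_cong) auto
  then show ?thesis by (simp add: recolored_def)
qed

lemma step_nbrs_cong: "\<forall>i\<le>n. ys i = xs i \<Longrightarrow> j \<le> Suc n \<Longrightarrow> step_nbrs ys j = step_nbrs xs j"
  using recolored_cong[of n ys xs "j - 1"] by (simp add: step_nbrs_def)

lemma step_clique_cong: "\<forall>i\<le>n. ys i = xs i \<Longrightarrow> j \<le> Suc n \<Longrightarrow> step_clique ys j = step_clique xs j"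
  using step_nbrs_cong[of n ys xs j] by (simp add: step_clique_def)

lemma visited_cong: "\<forall>i\<le>n. ys i = xs i \<Longrightarrow> k \<le> Suc n \<Longrightarrow> visited ys k = visited xs k"
  using step_clique_cong[of n ys xs] unfolding visited_def by (intro SUP_cong) auto

lemma valid_walk_base: "valid_walk (\<lambda>j. if j = 1 then x1 else x2) 2"
proof -
  let ?xs = "\<lambda>j::nat. if j = 1 then x1 else x2"
  have "?xs ` {1..<2} = {x1}" by (auto simp: atLeastLessThan_def)
  then have recolored_2: "recolored ?xs 2 = psi1(x1 := b)"
    using C1_mono x1_in_C1 by (auto simp: recolored_def mono_clique_def)
  have step_nbrs: "step_nbrs ?xs 2 = col_nbrs m psi1 b x1" by (simp add: step_nbrs_2)
  note recolor = optimal_recolor[OF psi1_optimal C1_mono x1_in_C1 b_range]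
  have "col_nbrs m psi1 b x1 \<inter> C1 = {}"
    using C1_mono a_ne_b by (auto simp: col_nbrs_def mono_clique_def)
  then show ?thesis
    using psi1_optimal C1_mono x1_in_C1 recolor recolored_1[of ?xs] recolored_2 step_nbrs x2_nbr
    by (auto simp: valid_walk_def step_clique_def alt_color_def visited_def
        numeral_2_eq_2 le_Suc_eq)
qed

lemma valid_walk_Suc:
  assumes "n \<ge> 2"
  shows "valid_walk xs (Suc n) \<longleftrightarrow> valid_walk xs n \<and>
    recolored xs (Suc n) \<in> optimal_colorings \<and>
    mono_clique (recolored xs (Suc n)) (step_clique xs (Suc n)) (alt_color (Suc n)) \<and>
    xs (Suc n) \<in> step_nbrs xs (Suc n) \<and> step_nbrs xs (Suc n) \<inter> visited xs n = {}"
  using assms by (auto simp: valid_walk_def atLeastAtMostSuc_conv step_clique_def)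

lemma valid_walk_cong:
  assumes "valid_walk xs n" "n \<ge> 2" "\<forall>i\<le>n. ys i = xs i"
  shows "valid_walk ys n"
proof -
  have "recolored ys j = recolored xs j" "step_clique ys j = step_clique xs j"
    "step_nbrs ys j = step_nbrs xs j" "visited ys (j - 1) = visited xs (j - 1)" if "j \<le> n" for j
    using that assms(3) recolored_cong step_clique_cong step_nbrs_cong visited_cong by auto
  then show ?thesis using assms unfolding valid_walk_def by auto
qed

lemma valid_walk_extend:
  assumes walk: "valid_walk xs n" and n_ge_2: "n \<ge> 2"
  shows "\<exists>w. valid_walk (xs(Suc n := w)) (Suc n)"
proof -
  have "step_nbrs xs (Suc n) \<noteq> {}"
    using card_step_nbrs_Suc[OF walk n_ge_2] alpha_ge_2[OF alt_color_range[of "Suc n"]] by auto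
  then obtain w where w: "w \<in> step_nbrs xs (Suc n)" by auto
  define ys where "ys = xs(Suc n := w)"
  have agree: "\<forall>i\<le>n. ys i = xs i" by (simp add: ys_def)
  have "valid_walk ys n" using valid_walk_cong[OF walk n_ge_2 agree] .
  moreover have "recolored ys (Suc n) = recolored xs (Suc n)"
    "step_clique ys (Suc n) = step_clique xs (Suc n)" "step_nbrs ys (Suc n) = step_nbrs xs (Suc n)"
    "visited ys n = visited xs n"
    using recolored_cong[OF agree, of "Suc n"] step_clique_cong[OF agree, of "Suc n"]
      step_nbrs_cong[OF agree, of "Suc n"] visited_cong[OF agree, of n] by simp_all
  moreover have "ys (Suc n) = w" by (simp add: ys_def)
  ultimately have "valid_walk ys (Suc n)"
    using valid_walk_Suc[OF n_ge_2] recolored_Suc_optimal[OF walk n_ge_2]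
      mono_clique_step_clique_Suc[OF walk n_ge_2] step_nbrs_Suc_fresh[OF walk n_ge_2] w by simp
  then show ?thesis unfolding ys_def by blast
qed

text \<open>Valid walks of every length exist, but their vertices are distinct.\<close>
lemma walk_impossible: False
proof -
  have ex_walk: "\<exists>xs. valid_walk xs n" if "n \<ge> 2" for n
    using that
  proof (induction n rule: nat_induct_at_least)
    case base then show ?case using valid_walk_base by blast
  next
    case (Suc n) then show ?case using valid_walk_extend by blast
  qed
  let ?n = "card (UNIV :: 'a set) + 2"
  obtain xs where walk: "valid_walk xs ?n" using ex_walk[of ?n] by auto
  have "inj_on xs {1..?n}"
  proof (rule inj_onI, rule ccontr)
    fix i j assume "i \<in> {1..?n}" "j \<in> {1..?n}" "xs i = xs j" "i \<noteq> j"
    then show False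
      using walk_distinct[OF walk, of i j] walk_distinct[OF walk, of j i] by (cases "i < j") auto
  qed
  then have "card (xs ` {1..?n}) = ?n" by (simp add: card_image)
  moreover have "card (xs ` {1..?n}) \<le> card (UNIV :: 'a set)" by (rule card_mono) auto
  ultimately show False by simp
qed

end

context partition_problem
begin

lemma optimal_mono_clique_nbrs_adjacent:
  assumes "psi \<in> optimal_colorings" "mono_clique psi K a" "x \<in> K" "b \<in> {1..c+1}" "a \<noteq> b"
    "y \<in> col_nbrs m psi b x" "z \<in> K - {x}"
  shows "0 < m {z, y}"
proof (rule ccontr)
  assume "\<not> 0 < m {z, y}"
  then interpret recoloring_walk m D c \<alpha> psi K a b x y
    using assms by unfold_locales auto
  show False by (rule walk_impossible)
qed

lemma optimal_mono_clique_imp_big_clique: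
  assumes optimal: "psi \<in> optimal_colorings" and K: "mono_clique psi K a" and x: "x \<in> K"
  defines "N \<equiv> insert x (\<Union>l\<in>{1..c+1}. col_nbrs m psi l x)"
  shows "is_clique m N" and "card N = D + 1"
proof -
  note recolor = optimal_recolor[OF optimal K x]
  show "is_clique m N"
    unfolding is_clique_def
  proof (intro ballI impI)
    fix u v assume "u \<in> N" "v \<in> N" "u \<noteq> v"
    show "0 < m {u, v}"
    proof (cases "u = x \<or> v = x")
      case True
      then show ?thesis using \<open>u \<in> N\<close> \<open>v \<in> N\<close> \<open>u \<noteq> v\<close>
        by (auto simp: N_def col_nbrs_def insert_commute)
    next
      case False
      then obtain l1 l2 where l1: "l1 \<in> {1..c+1}" "u \<in> col_nbrs m psi l1 x"
        and l2: "l2 \<in> {1..c+1}" "v \<in> col_nbrs m psi l2 x"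
        using \<open>u \<in> N\<close> \<open>v \<in> N\<close> by (auto simp: N_def)
      show ?thesis
      proof (cases "l1 = l2")
        case True
        then show ?thesis using recolor(2)[OF l1(1)] l1 l2 \<open>u \<noteq> v\<close>
          by (auto simp: mono_clique_def is_clique_def)
      next
        case False
        have "v \<in> col_nbrs m (psi(x := l1)) l2 x" using l2(2) by (simp add: col_nbrs_fun_upd)
        moreover have "u \<in> insert x (col_nbrs m psi l1 x) - {x}" using l1(2) False
          by (auto simp: col_nbrs_def)
        ultimately show ?thesis
          using optimal_mono_clique_nbrs_adjacent[OF recolor[OF l1(1)] insertI1 l2(1) False] by simp
      qed
    qed
  qed
  have "card (\<Union>l\<in>{1..c+1}. col_nbrs m psi l x) = (\<Sum>l=1..c+1. card (col_nbrs m psi l x))"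
    by (rule card_UN_disjoint) (auto simp: col_nbrs_def)
  also have "\<dots> = D"
    using optimal_card_col_nbrs[OF optimal K x] D_eq by simp
  moreover have "x \<notin> (\<Union>l\<in>{1..c+1}. col_nbrs m psi l x)" by (auto simp: col_nbrs_def)
  ultimately show "card N = D + 1" by (simp add: N_def)
qed

end

theorem theorem2:
  fixes m :: "'a::finite set \<Rightarrow> nat" and D c :: nat and \<alpha> :: "nat \<Rightarrow> nat"
  assumes "loopless_multigraph m"
    and "\<not> (\<exists>K. is_clique m K \<and> card K = D + 1)"
    and "max_degree m \<le> D"
    and "c \<ge> 1"
    and "D = (\<Sum>i=1..c+1. \<alpha> i)"
    and "\<forall>i\<in>{1..c+1}. \<alpha> i \<ge> 2"
  shows "\<exists>\<xi>\<in>colorings c.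
           Phi m c \<alpha> \<xi> = Min (Phi m c \<alpha> ` colorings c) \<and>
           (\<forall>i\<in>{1..c+1}. \<not> (\<exists>K. is_clique m K \<and> card K = \<alpha> i + 1 \<and> (\<forall>v\<in>K. \<xi> v = i)))"
proof -
  interpret partition_problem m D c \<alpha>
    using assms(1,3,5,6) by unfold_locales auto
  obtain psi where optimal: "psi \<in> optimal_colorings" using ex_optimal_coloring by blast
  have "\<not> mono_clique psi K i" for K i
  proof
    assume K: "mono_clique psi K i"
    then obtain x where "x \<in> K" by (fastforce simp: mono_clique_def)
    then show False using optimal_mono_clique_imp_big_clique[OF optimal K] assms(2) by blast
  qed
  then show ?thesis
    using optimal by (auto simp: optimal_colorings_def Phi_minimizers_def mono_clique_def)
qed

end
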